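(* Let $\kappa$ be an uncountable cardinal and $X$, $Y$ Banach spaces. If $X$ and $Y$ are both $\mathrm{ASQ}_{<\kappa}$, then the projective tensor product $X\widehat{\otimes}_\pi Y$ is $\mathrm{ASQ}_{<\kappa}$. If $X$ and $Y$ are both $\mathrm{SQ}_{<\kappa}$, then $X\widehat{\otimes}_\pi Y$ is $\mathrm{SQ}_{<\kappa}$.
   Context: $X\widehat{\otimes}_\pi Y$ is the completion of $X\otimes Y$ under the norm $\|u\|=\inf\{\sum_i\|x_i\|\|y_i\|: u=\sum_i x_i\otimes y_i\}$. A Banach space $Z$ is $\mathrm{ASQ}_{<\kappa}$ if for every set $A\subset S_Z$ with $|A|<\kappa$ and every $\varepsilon>0$ there exists $y\in S_Z$ with $\|x\pm y\|\le 1+\varepsilon$ for all $x\in A$; $Z$ is $\mathrm{SQ}_{<\kappa}$ if for every such $A$ there exists $y\in S_Z$ with $\|x\pm y\|\le 1$ for all $x\in A$. *)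

theory Defs
  imports "HOL-Analysis.Analysis" "HOL-Library.Equipollence"
begin

definition tsum :: "('a \<Rightarrow> 'b \<Rightarrow> 'z::real_vector) \<Rightarrow> ('a \<times> 'b) list \<Rightarrow> 'z" where
  "tsum t ps = sum_list (map (\<lambda>(x, y). t x y) ps)"

text \<open>t : X x Y -> Z exhibits the Banach space Z as the projective tensor product
  of X and Y, i.e. as the completion of the algebraic tensor product X (x) Y under the
  projective norm:
  (1) t is bilinear (t x y plays the role of x (x) y);
  (2) the induced linear map from the algebraic tensor product is injective
      (a finite sum of elementary tensors vanishing in Z vanishes in X (x) Y, i.e.
      is annihilated by every bilinear form);
  (3) on finite sums the norm of Z is the projective norm
      inf of the sums of norm x_i * norm y_i over all representations;
  (4) the algebraic tensor product is dense in Z.\<close>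
definition is_proj_tensor ::
  "('a::real_normed_vector \<Rightarrow> 'b::real_normed_vector \<Rightarrow> 'z::banach) \<Rightarrow> bool" where
  "is_proj_tensor t \<longleftrightarrow>
     bilinear t \<and>
     (\<forall>ps. tsum t ps = 0 \<longrightarrow>
        (\<forall>B :: 'a \<Rightarrow> 'b \<Rightarrow> real. bilinear B \<longrightarrow> tsum B ps = 0)) \<and>
     (\<forall>ps. norm (tsum t ps) =
        Inf {sum_list (map (\<lambda>(x, y). norm x * norm y) qs) | qs. tsum t qs = tsum t ps}) \<and>
     closure (span (range (\<lambda>(x, y). t x y))) = UNIV"

text \<open>A cardinal kappa is represented by a set K of cardinality kappa;
  |A| < kappa is A \<prec> K.\<close>
definition ASQ_lt :: "'k set \<Rightarrow> 'z::real_normed_vector itself \<Rightarrow> bool" where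
  "ASQ_lt K _ \<longleftrightarrow>
     (\<forall>A :: 'z set. A \<subseteq> sphere 0 1 \<longrightarrow> A \<prec> K \<longrightarrow>
        (\<forall>\<epsilon>>0. \<exists>y\<in>sphere 0 1. \<forall>x\<in>A. norm (x + y) \<le> 1 + \<epsilon> \<and> norm (x - y) \<le> 1 + \<epsilon>))"

definition SQ_lt :: "'k set \<Rightarrow> 'z::real_normed_vector itself \<Rightarrow> bool" where
  "SQ_lt K _ \<longleftrightarrow>
     (\<forall>A :: 'z set. A \<subseteq> sphere 0 1 \<longrightarrow> A \<prec> K \<longrightarrow>
        (\<exists>y\<in>sphere 0 1. \<forall>x\<in>A. norm (x + y) \<le> 1 \<and> norm (x - y) \<le> 1))"

end

(* Approximate each of the fewer than K unit vectors z of the tensor product by a sequence of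
   finite sums of elementary tensors whose projective weights tend to norm z. Squareness there yields unit vectors x0, y0 with norm (a + x0), norm (a - x0),
   norm (b + y0), norm (b - y0) all at most c for these factors a, b. By the polarisation identity
   2 (a (x) b + x0 (x) y0) = (a + x0) (x) (b + y0) + (a - x0) (x) (b - y0) every representation u
   of weight s satisfies norm (u + s x0 (x) y0) <= s c^2, and in the limit
   norm (z + x0 (x) y0) <= c^2; replacing y0 by -y0 gives the other sign. The finite-dimensional
   Hahn-Banach theorem shows that x0 (x) y0 is a unit vector. Taking c = 1 and c = 1 + delta with
   (1 + delta)^2 = 1 + eps gives the two statements. *)

theory Submission
  imports Defs
begin

lemma lepoll_iff_card_of_ordLeq: "A \<lesssim> B \<longleftrightarrow> ordLeq2 (card_of A) (card_of B)"
  by (simp add: lepoll_def card_of_ordLeq[symmetric] image_subset_iff_funcset)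

lemma countable_lesspoll_uncountable:
  assumes "countable A" "uncountable K"
  shows "A \<prec> K"
proof -
  have "A \<lesssim> (UNIV :: nat set)"
    using assms(1) by (auto simp: countable_def lepoll_def)
  also have "(UNIV :: nat set) \<lesssim> K"
    using assms(2) uncountable_infinite infinite_le_lepoll by blast
  finally show ?thesis
    using assms countable_eqpoll eqpoll_sym unfolding lesspoll_def by blast
qed

lemma UN_countable_lesspoll:
  assumes K: "uncountable K" and A: "A \<prec> K" and F: "\<And>a. a \<in> A \<Longrightarrow> countable (F a)"
  shows "(\<Union>a\<in>A. F a) \<prec> K"
proof (cases "finite A")
  case True
  then show ?thesis
    using F K by (intro countable_lesspoll_uncountable countable_UN) (auto intro: countable_finite)
next
  case False
  have "F a \<lesssim> A" if "a \<in> A" for a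
  proof -
    have "F a \<lesssim> (UNIV :: nat set)"
      using F[OF that] by (auto simp: countable_def lepoll_def)
    also have "(UNIV :: nat set) \<lesssim> A"
      using False infinite_le_lepoll by blast
    finally show ?thesis .
  qed
  then have "(\<Union>a\<in>A. F a) \<lesssim> A"
    using card_of_UNION_ordLeq_infinite[OF False, of A F]
    by (simp add: lepoll_iff_card_of_ordLeq[symmetric])
  then show ?thesis using A lesspoll_trans1 by blast
qed

lemma linear_functional_vanishing_on_subspace:
  fixes v :: "'a::real_vector"
  assumes W: "subspace W" and v: "v \<notin> W"
  obtains g :: "'a \<Rightarrow> real" where "linear g" "g v = 1" "\<And>w. w \<in> W \<Longrightarrow> g w = 0"
proof -
  obtain B where B: "B \<subseteq> W" "independent B" "W \<subseteq> span B"
    by (rule basis_exists)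
  have "v \<notin> span B"
    using B W v span_minimal by blast
  then have "independent (insert v B)"
    using B(2) independent_insertI by blast
  then obtain g :: "'a \<Rightarrow> real" where g: "linear g" "\<And>u. u \<in> insert v B \<Longrightarrow> g u = (if u = v then 1 else 0)"
    using linear_independent_extend[of "insert v B" "\<lambda>u. if u = v then 1 else 0"] by blast
  have "g u = 0" if "u \<in> B" for u
    using g(2) B(1) v that by auto
  then have "g w = 0" if "w \<in> W" for w
    using linear_eq_0_on_span[OF g(1)] B(3) that by blast
  then show ?thesis
    using that g by simp
qed

lemma bilinear_mult_linear:
  fixes f :: "'a::real_vector \<Rightarrow> real" and g :: "'b::real_vector \<Rightarrow> real"
  assumes "linear f" "linear g"
  shows "bilinear (\<lambda>u v. f u * g v)"
  unfolding bilinear_def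
  by (auto intro!: linearI simp: linear_add[OF assms(1)] linear_add[OF assms(2)]
      linear_scale[OF assms(1)] linear_scale[OF assms(2)] distrib_left distrib_right)

lemma norm_dominated_separating_value:
  fixes f :: "'a::real_normed_vector \<Rightarrow> real"
  assumes W: "subspace W" and f: "linear f" and fW: "\<And>w. w \<in> W \<Longrightarrow> \<bar>f w\<bar> \<le> norm w"
  obtains c where "\<And>w. w \<in> W \<Longrightarrow> f w - norm (w - v) \<le> c"
    "\<And>w. w \<in> W \<Longrightarrow> c \<le> norm (w + v) - f w"
proof -
  define S where "S = {f w - norm (w - v) | w. w \<in> W}"
  have gap: "f w' - norm (w' - v) \<le> norm (w + v) - f w" if "w \<in> W" "w' \<in> W" for w w'
  proof -
    have "f w + f w' = f (w + w')"
      by (simp add: linear_add[OF f])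
    also have "\<dots> \<le> norm (w + w')"
      using fW[of "w + w'"] W that by (simp add: subspace_add)
    also have "\<dots> \<le> norm (w + v) + norm (w' - v)"
      using norm_triangle_ineq[of "w + v" "w' - v"] by simp
    finally show ?thesis by simp
  qed
  have "0 \<in> W"
    using W subspace_0 by blast
  then have "S \<noteq> {}" and "bdd_above S"
    unfolding S_def bdd_above_def using gap[OF \<open>0 \<in> W\<close>] by blast+
  show ?thesis
  proof (rule that[of "Sup S"])
    show "f w - norm (w - v) \<le> Sup S" if "w \<in> W" for w
      using \<open>bdd_above S\<close> that by (auto simp: S_def intro!: cSup_upper)
    show "Sup S \<le> norm (w + v) - f w" if "w \<in> W" for w
      using \<open>S \<noteq> {}\<close> gap that by (auto simp: S_def intro!: cSup_least)
  qed
qed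

(* The one-dimensional step of the Hahn-Banach theorem, dominated by the norm. *)
lemma norm_dominated_extension_value:
  fixes f :: "'a::real_normed_vector \<Rightarrow> real"
  assumes W: "subspace W" and f: "linear f" and fW: "\<And>w. w \<in> W \<Longrightarrow> \<bar>f w\<bar> \<le> norm w"
  obtains c where "\<And>w a. w \<in> W \<Longrightarrow> f w + a * c \<le> norm (w + a *\<^sub>R v)"
proof -
  obtain c where below: "\<And>w. w \<in> W \<Longrightarrow> f w - norm (w - v) \<le> c"
    and above: "\<And>w. w \<in> W \<Longrightarrow> c \<le> norm (w + v) - f w"
    using norm_dominated_separating_value[OF W f fW] by blast
  have "f w + a * c \<le> norm (w + a *\<^sub>R v)" if w: "w \<in> W" for w a
  proof (cases a "0::real" rule: linorder_cases)
    case less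
    define b where "b = - a"
    have b: "b > 0"
      using less by (simp add: b_def)
    have wb: "w /\<^sub>R b \<in> W"
      using W w subspace_scale by blast
    have "f (w /\<^sub>R b) = f w / b"
      by (simp add: linear_scale[OF f] divide_inverse_commute)
    then have "f w + a * c = b * (f (w /\<^sub>R b) - c)"
      using b by (simp add: b_def field_simps)
    also have "\<dots> \<le> b * norm (w /\<^sub>R b - v)"
      using below[OF wb] b by (intro mult_left_mono) auto
    also have "\<dots> = norm (w + a *\<^sub>R v)"
      using b norm_scaleR[of b "w /\<^sub>R b - v"] by (simp add: b_def algebra_simps)
    finally show ?thesis .
  next
    case equal
    then show ?thesis
      using fW w by force
  next
    case greater
    have wa: "w /\<^sub>R a \<in> W"
      using W w subspace_scale by blast
    have "f w + a * c = a * (f (w /\<^sub>R a) + c)"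
      using greater by (simp add: linear_scale[OF f] field_simps)
    also have "\<dots> \<le> a * norm (w /\<^sub>R a + v)"
      using above[OF wa] greater by (intro mult_left_mono) auto
    also have "\<dots> = norm (w + a *\<^sub>R v)"
      using greater norm_scaleR[of a "w /\<^sub>R a + v"] by (simp add: algebra_simps)
    finally show ?thesis .
  qed
  then show ?thesis
    using that by blast
qed

lemma norm_dominated_linear_extension:
  fixes f :: "'a::real_normed_vector \<Rightarrow> real"
  assumes W: "subspace W" and f: "linear f" and fW: "\<And>w. w \<in> W \<Longrightarrow> \<bar>f w\<bar> \<le> norm w"
  obtains h where "linear h" "\<And>w. w \<in> W \<Longrightarrow> h w = f w"
    "\<And>u. u \<in> span (insert v W) \<Longrightarrow> \<bar>h u\<bar> \<le> norm u"
proof (cases "v \<in> W")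
  case True
  then have "span (insert v W) = W"
    using span_base span_redundant W[folded span_eq_iff] by metis
  then show ?thesis
    using that f fW by simp
next
  case False
  obtain g :: "'a \<Rightarrow> real" where g: "linear g" "g v = 1" "\<And>w. w \<in> W \<Longrightarrow> g w = 0"
    using linear_functional_vanishing_on_subspace[OF W False] by blast
  obtain c where c: "\<And>w a. w \<in> W \<Longrightarrow> f w + a * c \<le> norm (w + a *\<^sub>R v)"
    using norm_dominated_extension_value[OF W f fW] by blast
  define h where "h u = f u + (c - f v) * g u" for u
  have "linear h"
    unfolding h_def
    by (rule linearI) (simp_all add: linear_add[OF f] linear_add[OF g(1)]
        linear_scale[OF f] linear_scale[OF g(1)] algebra_simps)
  have h_on_line: "h (w + a *\<^sub>R v) = f w + a * c" if "w \<in> W" for w a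
    using that by (simp add: h_def linear_add[OF f] linear_add[OF g(1)]
        linear_scale[OF f] linear_scale[OF g(1)] g(2,3) algebra_simps)
  have upper: "h u \<le> norm u" if u: "u \<in> span (insert v W)" for u
  proof -
    obtain a where "u - a *\<^sub>R v \<in> W"
      using u by (auto simp: span_insert W[folded span_eq_iff])
    then show ?thesis
      using c[of "u - a *\<^sub>R v" a] h_on_line[of "u - a *\<^sub>R v" a] by simp
  qed
  have "\<bar>h u\<bar> \<le> norm u" if "u \<in> span (insert v W)" for u
    using upper[OF that] upper[OF span_neg[OF that]] by (simp add: linear_neg[OF \<open>linear h\<close>])
  moreover have "h w = f w" if "w \<in> W" for w
    using that g(3) by (simp add: h_def)
  ultimately show ?thesis
    using that \<open>linear h\<close> by blast
qed

lemma norming_functional_on_finite_span: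
  fixes x :: "'a::real_normed_vector"
  assumes "finite S"
  shows "\<exists>f :: 'a \<Rightarrow> real. linear f \<and> f x = norm x \<and> (\<forall>v\<in>span (insert x S). \<bar>f v\<bar> \<le> norm v)"
  using assms
proof (induction S rule: finite_induct)
  case empty
  show ?case
  proof (cases "x = 0")
    case True
    then show ?thesis
      by (intro exI[of _ "\<lambda>_. 0"]) (simp add: linear_zero)
  next
    case False
    obtain g :: "'a \<Rightarrow> real" where g: "linear g" "g x = 1"
      using linear_functional_vanishing_on_subspace[of "{0}" x] False by auto
    have "linear (\<lambda>v. norm x * g v)"
      by (rule linearI) (simp_all add: linear_add[OF g(1)] linear_scale[OF g(1)] algebra_simps)
    moreover have "\<bar>norm x * g v\<bar> \<le> norm v" if "v \<in> span {x}" for v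
      using that g by (auto simp: span_singleton linear_scale abs_mult)
    ultimately show ?thesis
      using g by (intro exI[of _ "\<lambda>v. norm x * g v"]) simp
  qed
next
  case (insert v S)
  then obtain f :: "'a \<Rightarrow> real" where f: "linear f" "f x = norm x"
    "\<And>u. u \<in> span (insert x S) \<Longrightarrow> \<bar>f u\<bar> \<le> norm u"
    by blast
  obtain h where h: "linear h" "\<And>w. w \<in> span (insert x S) \<Longrightarrow> h w = f w"
    "\<And>u. u \<in> span (insert v (span (insert x S))) \<Longrightarrow> \<bar>h u\<bar> \<le> norm u"
    using norm_dominated_linear_extension[OF subspace_span f(1) f(3)] by blast
  have "span (insert x (insert v S)) \<subseteq> span (insert v (span (insert x S)))"
    by (intro span_mono) (auto intro: span_base)
  then show ?case
    using h f(2) span_base[of x "insert x S"] by (intro exI[of _ h]) auto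
qed

definition proj_weight :: "('a::real_normed_vector \<times> 'b::real_normed_vector) list \<Rightarrow> real" where
  "proj_weight qs = sum_list (map (\<lambda>(x, y). norm x * norm y) qs)"

lemma tsum_Nil [simp]: "tsum t [] = 0"
  by (simp add: tsum_def)

lemma tsum_Cons [simp]: "tsum t ((x, y) # qs) = t x y + tsum t qs"
  by (simp add: tsum_def)

lemma tsum_append [simp]: "tsum t (ps @ qs) = tsum t ps + tsum t qs"
  by (simp add: tsum_def)

lemma proj_weight_Nil [simp]: "proj_weight [] = 0"
  by (simp add: proj_weight_def)

lemma proj_weight_Cons [simp]: "proj_weight ((x, y) # qs) = norm x * norm y + proj_weight qs"
  by (simp add: proj_weight_def)

lemma proj_weight_nonneg: "0 \<le> proj_weight qs"
  unfolding proj_weight_def by (induction qs) auto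

lemma norm_tsum_le_proj_weight:
  assumes "\<And>x y. norm (t x y) \<le> norm x * norm y"
  shows "norm (tsum t qs) \<le> proj_weight qs"
proof (induction qs)
  case (Cons pq qs)
  then show ?case
    using assms[of "fst pq" "snd pq"] norm_triangle_le
    by (cases pq) (auto intro: norm_triangle_le add_mono)
qed simp

lemma tsum_map_scaleR_left:
  assumes "bilinear t"
  shows "tsum t (map (\<lambda>(x, y). (c *\<^sub>R x, y)) qs) = c *\<^sub>R tsum t qs"
  by (induction qs) (auto simp: bilinear_lmul[OF assms] scaleR_add_right)

lemma span_elementary_tensors_subset:
  assumes "bilinear t"
  shows "span (range (\<lambda>(x, y). t x y)) \<subseteq> range (tsum t)"
proof (rule span_minimal)
  show "range (\<lambda>(x, y). t x y) \<subseteq> range (tsum t)"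
    by clarify (metis add.right_neutral rangeI tsum_Cons tsum_Nil)
  show "subspace (range (tsum t))"
    unfolding subspace_def
    by (metis (no_types, lifting) rangeE rangeI tsum_Nil tsum_append tsum_map_scaleR_left[OF assms])
qed

lemma bdd_below_proj_weights: "bdd_below {proj_weight qs | qs. P qs}"
  by (auto intro: bdd_belowI[where m = 0] proj_weight_nonneg)

lemma bilinear_proj_tensor: "is_proj_tensor t \<Longrightarrow> bilinear t"
  by (simp add: is_proj_tensor_def)

lemma proj_tensor_norm_tsum:
  assumes "is_proj_tensor t"
  shows "norm (tsum t ps) = Inf {proj_weight qs | qs. tsum t qs = tsum t ps}"
  using assms by (simp add: is_proj_tensor_def proj_weight_def)

lemma proj_tensor_norm_le:
  assumes "is_proj_tensor t"
  shows "norm (t x y) \<le> norm x * norm y"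
proof -
  have "norm (tsum t [(x, y)]) \<le> proj_weight [(x, y)]"
    unfolding proj_tensor_norm_tsum[OF assms]
    by (intro cInf_lower bdd_below_proj_weights) blast
  then show ?thesis
    by simp
qed

lemma norm_mult_le_proj_weight:
  fixes t :: "'a::real_normed_vector \<Rightarrow> 'b::real_normed_vector \<Rightarrow> 'z::banach"
  assumes t: "is_proj_tensor t" and qs: "tsum t qs = t x y"
  shows "norm x * norm y \<le> proj_weight qs"
proof -
  obtain f :: "'a \<Rightarrow> real" where f: "linear f" "f x = norm x"
    "\<And>p. p \<in> span (insert x (fst ` set qs)) \<Longrightarrow> \<bar>f p\<bar> \<le> norm p"
    using norming_functional_on_finite_span[of "fst ` set qs" x] by blast
  obtain g :: "'b \<Rightarrow> real" where g: "linear g" "g y = norm y"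
    "\<And>q. q \<in> span (insert y (snd ` set qs)) \<Longrightarrow> \<bar>g q\<bar> \<le> norm q"
    using norming_functional_on_finite_span[of "snd ` set qs" y] by blast
  define B where "B u v = f u * g v" for u v
  have B: "bilinear B"
    unfolding B_def using f(1) g(1) by (rule bilinear_mult_linear)
  have "tsum t (qs @ [(- x, y)]) = 0"
    using qs bilinear_lneg[OF bilinear_proj_tensor[OF t]] by simp
  then have "tsum B (qs @ [(- x, y)]) = 0"
    using t B unfolding is_proj_tensor_def by blast
  then have "norm x * norm y = tsum B qs"
    using f(2) g(2) bilinear_lneg[OF B, of x y] by (simp add: B_def[of x y])
  also have "\<dots> \<le> proj_weight qs"
    unfolding tsum_def proj_weight_def
  proof (intro sum_list_mono, clarify)
    fix p q assume pq: "(p, q) \<in> set qs"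
    have fp: "\<bar>f p\<bar> \<le> norm p"
      using pq by (intro f(3) span_base insertI2) force
    have gq: "\<bar>g q\<bar> \<le> norm q"
      using pq by (intro g(3) span_base insertI2) force
    have "B p q \<le> \<bar>f p\<bar> * \<bar>g q\<bar>"
      unfolding B_def by (metis abs_ge_self abs_mult)
    also have "\<dots> \<le> norm p * norm q"
      using fp gq by (intro mult_mono) auto
    finally show "B p q \<le> norm p * norm q" .
  qed
  finally show ?thesis .
qed

lemma proj_tensor_norm_elementary:
  assumes t: "is_proj_tensor t"
  shows "norm (t x y) = norm x * norm y"
proof (rule antisym)
  show "norm (t x y) \<le> norm x * norm y"
    using t by (rule proj_tensor_norm_le)
  have "norm x * norm y \<le> Inf {proj_weight qs | qs. tsum t qs = tsum t [(x, y)]}"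
    by (intro cInf_greatest) (blast, use norm_mult_le_proj_weight[OF t] in auto)
  then show "norm x * norm y \<le> norm (t x y)"
    using proj_tensor_norm_tsum[OF t, of "[(x, y)]"] by simp
qed

lemma proj_tensor_approx:
  assumes t: "is_proj_tensor t" and e: "e > 0"
  obtains qs where "norm (z - tsum t qs) < e" "proj_weight qs < norm z + e"
proof -
  have "z \<in> closure (span (range (\<lambda>(x, y). t x y)))"
    using t by (simp add: is_proj_tensor_def)
  then obtain v where v: "v \<in> span (range (\<lambda>(x, y). t x y))" and zv: "norm (z - v) < e / 2"
    using e unfolding closure_approachable by (metis dist_norm half_gt_zero norm_minus_commute)
  obtain ps where ps: "v = tsum t ps"
    using v span_elementary_tensors_subset[OF bilinear_proj_tensor[OF t]] by blast
  have "Inf {proj_weight qs | qs. tsum t qs = v} < norm v + e / 2"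
    using proj_tensor_norm_tsum[OF t, of ps] e ps by simp
  then obtain qs where qs: "tsum t qs = v" "proj_weight qs < norm v + e / 2"
    using bdd_below_proj_weights ps by (subst (asm) cInf_less_iff) auto
  show ?thesis
  proof (rule that)
    show "norm (z - tsum t qs) < e"
      using zv qs(1) e by simp
    show "proj_weight qs < norm z + e"
      using zv qs(2) norm_triangle_ineq2[of v z] by (simp add: norm_minus_commute)
  qed
qed

definition square_bounded :: "real \<Rightarrow> 'a::real_normed_vector set \<Rightarrow> 'a \<Rightarrow> bool" where
  "square_bounded c A y \<longleftrightarrow> (\<forall>x\<in>A. norm (x + y) \<le> c \<and> norm (x - y) \<le> c)"

lemma square_bounded_uminus [simp]: "square_bounded c A (- y) \<longleftrightarrow> square_bounded c A y"
  by (auto simp: square_bounded_def)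

lemma square_bounded_subset: "square_bounded c A y \<Longrightarrow> B \<subseteq> A \<Longrightarrow> square_bounded c B y"
  by (auto simp: square_bounded_def)

definition left_directions :: "('a::real_normed_vector \<times> 'b) list \<Rightarrow> 'a set" where
  "left_directions qs = sgn ` (fst ` set qs - {0})"

definition right_directions :: "('a \<times> 'b::real_normed_vector) list \<Rightarrow> 'b set" where
  "right_directions qs = sgn ` (snd ` set qs - {0})"

lemma left_directions_subset_sphere: "left_directions qs \<subseteq> sphere 0 1"
  by (auto simp: left_directions_def norm_sgn split: if_splits)

lemma right_directions_subset_sphere: "right_directions qs \<subseteq> sphere 0 1"
  by (auto simp: right_directions_def norm_sgn split: if_splits)

lemma finite_left_directions [simp]: "finite (left_directions qs)"
  by (simp add: left_directions_def)

lemma finite_right_directions [simp]: "finite (right_directions qs)"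
  by (simp add: right_directions_def)

lemma norm_bilinear_add_le_square:
  assumes t: "bilinear t" and nt: "\<And>p q. norm (t p q) \<le> norm p * norm q"
    and x: "square_bounded c {a} x" and y: "square_bounded c {b} y"
  shows "norm (t a b + t x y) \<le> c * c"
proof -
  have "2 *\<^sub>R (t a b + t x y) = t (a + x) (b + y) + t (a - x) (b - y)"
    by (simp add: bilinear_ladd[OF t] bilinear_radd[OF t] bilinear_lsub[OF t]
        bilinear_rsub[OF t] scaleR_2 algebra_simps)
  then have "2 * norm (t a b + t x y) \<le> norm (t (a + x) (b + y)) + norm (t (a - x) (b - y))"
    using norm_triangle_ineq[of "t (a + x) (b + y)" "t (a - x) (b - y)"]
    by (metis norm_scaleR abs_numeral real_norm_def)
  also have "\<dots> \<le> norm (a + x) * norm (b + y) + norm (a - x) * norm (b - y)"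
    using nt by (intro add_mono)
  also have "\<dots> \<le> c * c + c * c"
    using x y order_trans[OF norm_ge_zero[of "a + x"]]
    by (intro add_mono mult_mono) (auto simp: square_bounded_def)
  finally show ?thesis
    by simp
qed

lemma norm_elementary_add_le_square:
  assumes t: "bilinear t" and nt: "\<And>p q. norm (t p q) \<le> norm p * norm q"
    and x: "p \<noteq> 0 \<Longrightarrow> square_bounded c {sgn p} x" and y: "q \<noteq> 0 \<Longrightarrow> square_bounded c {sgn q} y"
  shows "norm (t p q + (norm p * norm q) *\<^sub>R t x y) \<le> norm p * norm q * (c * c)"
proof (cases "p = 0 \<or> q = 0")
  case True
  then show ?thesis
    by (auto simp: bilinear_lzero[OF t] bilinear_rzero[OF t])
next
  case False
  have "t p q = t (norm p *\<^sub>R sgn p) (norm q *\<^sub>R sgn q)"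
    using False by (simp add: sgn_div_norm)
  then have "t p q + (norm p * norm q) *\<^sub>R t x y = (norm p * norm q) *\<^sub>R (t (sgn p) (sgn q) + t x y)"
    by (simp add: bilinear_lmul[OF t] bilinear_rmul[OF t] scaleR_add_right)
  moreover have "norm (t (sgn p) (sgn q) + t x y) \<le> c * c"
    using False x y by (intro norm_bilinear_add_le_square[OF t nt]) auto
  ultimately show ?thesis
    by (simp add: mult_left_mono)
qed

lemma norm_tsum_add_proj_weight_le:
  assumes t: "bilinear t" and nt: "\<And>p q. norm (t p q) \<le> norm p * norm q"
    and x: "square_bounded c (left_directions qs) x"
    and y: "square_bounded c (right_directions qs) y"
  shows "norm (tsum t qs + proj_weight qs *\<^sub>R t x y) \<le> proj_weight qs * (c * c)"
  using x y
proof (induction qs)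
  case (Cons pq qs)
  obtain p q where pq: "pq = (p, q)"
    by fastforce
  have "norm (tsum t qs + proj_weight qs *\<^sub>R t x y) \<le> proj_weight qs * (c * c)"
    using Cons by (auto simp: left_directions_def right_directions_def intro: square_bounded_subset)
  moreover have "norm (t p q + (norm p * norm q) *\<^sub>R t x y) \<le> norm p * norm q * (c * c)"
    using Cons.prems pq by (intro norm_elementary_add_le_square[OF t nt])
      (auto simp: left_directions_def right_directions_def square_bounded_def)
  ultimately show ?case
    using norm_triangle_le[of "t p q + (norm p * norm q) *\<^sub>R t x y"
        "tsum t qs + proj_weight qs *\<^sub>R t x y"]
    by (simp add: pq algebra_simps)
qed simp

lemma norm_add_elementary_le:
  assumes t: "bilinear t" and nt: "\<And>p q. norm (t p q) \<le> norm p * norm q"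
    and "norm x = 1" "norm y = 1"
    and x: "square_bounded c (left_directions qs) x" and y: "square_bounded c (right_directions qs) y"
    and z: "norm z = 1" and approx: "norm (z - tsum t qs) < e" "proj_weight qs < 1 + e"
  shows "norm (z + t x y) \<le> c * c + (2 + c * c) * e"
proof -
  define u where "u = tsum t qs"
  define s where "s = proj_weight qs"
  have "norm u \<le> s"
    unfolding u_def s_def using nt by (rule norm_tsum_le_proj_weight)
  moreover have "norm z \<le> norm u + norm (z - u)"
    by (rule norm_triangle_sub)
  ultimately have s: "\<bar>1 - s\<bar> < e"
    using z approx by (simp add: u_def s_def)
  have "norm (t x y) \<le> 1"
    using nt[of x y] assms(3,4) by simp
  then have w: "\<bar>1 - s\<bar> * norm (t x y) \<le> e"
    using mult_left_mono[of "norm (t x y)" 1 "\<bar>1 - s\<bar>"] s by simp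
  have "z + t x y = (z - u) + (u + s *\<^sub>R t x y) + (1 - s) *\<^sub>R t x y"
    by (simp add: algebra_simps)
  then have "norm (z + t x y) \<le> norm (z - u) + norm (u + s *\<^sub>R t x y) + \<bar>1 - s\<bar> * norm (t x y)"
    by (metis norm_scaleR norm_triangle_le norm_triangle_ineq add_mono order_refl real_norm_def)
  also have "\<dots> \<le> e + s * (c * c) + e"
    using approx(1) norm_tsum_add_proj_weight_le[OF t nt x y] s w
    unfolding u_def s_def
    by (intro add_mono) auto
  also have "\<dots> \<le> c * c + (2 + c * c) * e"
    using mult_right_mono[of s "1 + e" "c * c"] approx(2) by (simp add: s_def algebra_simps)
  finally show ?thesis .
qed

lemma norm_add_elementary_le_of_approximations:
  assumes t: "is_proj_tensor t" and "norm x = 1" "norm y = 1" "norm z = 1"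
    and R: "\<And>k. norm (z - tsum t (R k)) < inverse (Suc k)"
      "\<And>k. proj_weight (R k) < 1 + inverse (Suc k)"
    and x: "\<And>k. square_bounded c (left_directions (R k)) x"
    and y: "\<And>k. square_bounded c (right_directions (R k)) y"
  shows "norm (z + t x y) \<le> c * c"
proof (rule LIMSEQ_le_const)
  have "(\<lambda>k. c * c + (2 + c * c) * inverse (Suc k)) \<longlonglongrightarrow> c * c + (2 + c * c) * 0"
    by (intro tendsto_intros LIMSEQ_inverse_real_of_nat)
  then show "(\<lambda>k. c * c + (2 + c * c) * inverse (Suc k)) \<longlonglongrightarrow> c * c"
    by simp
  show "\<exists>N. \<forall>k\<ge>N. norm (z + t x y) \<le> c * c + (2 + c * c) * inverse (Suc k)"
    using norm_add_elementary_le[OF bilinear_proj_tensor[OF t] proj_tensor_norm_le[OF t]]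
      assms by blast
qed

definition SQ_lt_bound :: "'k set \<Rightarrow> real \<Rightarrow> 'z::real_normed_vector itself \<Rightarrow> bool" where
  "SQ_lt_bound K c _ \<longleftrightarrow>
     (\<forall>A :: 'z set. A \<subseteq> sphere 0 1 \<longrightarrow> A \<prec> K \<longrightarrow> (\<exists>y\<in>sphere 0 1. square_bounded c A y))"

lemma ASQ_lt_iff_SQ_lt_bound: "ASQ_lt K T \<longleftrightarrow> (\<forall>\<epsilon>>0. SQ_lt_bound K (1 + \<epsilon>) T)"
  by (auto simp: ASQ_lt_def SQ_lt_bound_def square_bounded_def)

lemma SQ_lt_iff_SQ_lt_bound: "SQ_lt K T \<longleftrightarrow> SQ_lt_bound K 1 T"
  by (auto simp: SQ_lt_def SQ_lt_bound_def square_bounded_def)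

lemma SQ_lt_boundD:
  fixes A :: "'z::real_normed_vector set"
  assumes "SQ_lt_bound K c TYPE('z)" "A \<subseteq> sphere 0 1" "A \<prec> K"
  obtains y where "y \<in> sphere 0 1" "square_bounded c A y"
  using assms by (auto simp: SQ_lt_bound_def)

lemma SQ_lt_bound_proj_tensor:
  fixes t :: "'a::real_normed_vector \<Rightarrow> 'b::real_normed_vector \<Rightarrow> 'z::banach"
  assumes K: "uncountable K" and t: "is_proj_tensor t"
    and X: "SQ_lt_bound K c TYPE('a)" and Y: "SQ_lt_bound K c TYPE('b)"
  shows "SQ_lt_bound K (c * c) TYPE('z)"
  unfolding SQ_lt_bound_def
proof (intro allI impI)
  fix A :: "'z set"
  assume A: "A \<subseteq> sphere 0 1" "A \<prec> K"
  have "\<exists>qs. norm (z - tsum t qs) < inverse (Suc k) \<and> proj_weight qs < norm z + inverse (Suc k)"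
    for z k
    using proj_tensor_approx[OF t, of "inverse (Suc k)" z] by auto
  then obtain R where R: "\<And>z k. norm (z - tsum t (R z k)) < inverse (Suc k)"
    "\<And>z k. proj_weight (R z k) < norm z + inverse (Suc k)"
    by metis
  define AX where "AX = (\<Union>z\<in>A. \<Union>k. left_directions (R z k))"
  define AY where "AY = (\<Union>z\<in>A. \<Union>k. right_directions (R z k))"
  have "AX \<prec> K" "AY \<prec> K"
    unfolding AX_def AY_def
    by (intro UN_countable_lesspoll[OF K A(2)] countable_UN[OF countableI_type] countable_finite; simp)+
  moreover have "AX \<subseteq> sphere 0 1" "AY \<subseteq> sphere 0 1"
    using left_directions_subset_sphere right_directions_subset_sphere by (auto simp: AX_def AY_def)
  ultimately obtain x y where x: "x \<in> sphere 0 1" "square_bounded c AX x"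
    and y: "y \<in> sphere 0 1" "square_bounded c AY y"
    using SQ_lt_boundD[OF X] SQ_lt_boundD[OF Y] by metis
  have "norm (z + t x y') \<le> c * c" if z: "z \<in> A" and y': "y' = y \<or> y' = - y" for z y'
  proof (rule norm_add_elementary_le_of_approximations[OF t])
    show "square_bounded c (left_directions (R z k)) x" for k
      by (rule square_bounded_subset[OF x(2)]) (use z in \<open>auto simp: AX_def\<close>)
    show "square_bounded c (right_directions (R z k)) y'" for k
      by (rule square_bounded_subset[of c AY]) (use y(2) y' z in \<open>auto simp: AY_def\<close>)
    show "proj_weight (R z k) < 1 + inverse (Suc k)" for k
      using R(2)[of z k] A(1) z by auto
  qed (use A(1) x(1) y(1) z y' R(1) in auto)
  then have "square_bounded (c * c) A (t x y)"
    using bilinear_rneg[OF bilinear_proj_tensor[OF t], of x y]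
    by (simp add: square_bounded_def) (metis diff_conv_add_uminus)
  moreover have "t x y \<in> sphere 0 1"
    using x(1) y(1) by (simp add: proj_tensor_norm_elementary[OF t])
  ultimately show "\<exists>w\<in>sphere 0 1. square_bounded (c * c) A w"
    by blast
qed

theorem theorem4p4:
  fixes K :: "'k set"
    and t :: "'a::banach \<Rightarrow> 'b::banach \<Rightarrow> 'z::banach"
  assumes "uncountable K"
    and "is_proj_tensor t"
  shows "(ASQ_lt K TYPE('a) \<and> ASQ_lt K TYPE('b) \<longrightarrow> ASQ_lt K TYPE('z)) \<and>
         (SQ_lt K TYPE('a) \<and> SQ_lt K TYPE('b) \<longrightarrow> SQ_lt K TYPE('z))"
proof (intro conjI impI)
  assume "ASQ_lt K TYPE('a) \<and> ASQ_lt K TYPE('b)"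
  then have X: "SQ_lt_bound K (1 + \<delta>) TYPE('a)" and Y: "SQ_lt_bound K (1 + \<delta>) TYPE('b)"
    if "\<delta> > 0" for \<delta>
    using that by (simp_all add: ASQ_lt_iff_SQ_lt_bound)
  show "ASQ_lt K TYPE('z)"
    unfolding ASQ_lt_iff_SQ_lt_bound
  proof (intro allI impI)
    fix \<epsilon> :: real
    assume "\<epsilon> > 0"
    define \<delta> where "\<delta> = sqrt (1 + \<epsilon>) - 1"
    have "\<delta> > 0" and square: "(1 + \<delta>) * (1 + \<delta>) = 1 + \<epsilon>"
      using \<open>\<epsilon> > 0\<close> by (simp_all add: \<delta>_def)
    show "SQ_lt_bound K (1 + \<epsilon>) TYPE('z)"
      unfolding square[symmetric] using \<open>\<delta> > 0\<close> by (intro SQ_lt_bound_proj_tensor[OF assms X Y])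
  qed
next
  assume "SQ_lt K TYPE('a) \<and> SQ_lt K TYPE('b)"
  then show "SQ_lt K TYPE('z)"
    using SQ_lt_bound_proj_tensor[OF assms, of 1] by (simp add: SQ_lt_iff_SQ_lt_bound)
qed

end
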